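(* Let $0 \le \alpha < 1$ and let $f = h + \overline{g} \in \mathcal{F}(\alpha)$ with $h(z) = z + \sum_{k=2}^\infty a_k z^k$ and $g(z) = \sum_{k=1}^\infty b_k z^k$. Then for all $n \ge 2$, $$|a_n| \le A_n(\alpha) \quad\text{and}\quad |b_n| \le \frac{n-1}{n-2\alpha}\,A_n(\alpha), \qquad\text{where } A_n(\alpha) = \frac{1}{n!}\prod_{j=2}^n (j - 2\alpha).$$ These bounds are sharp: equality holds in every inequality for the function $f_\alpha = h_\alpha + \overline{g_\alpha} \in \mathcal{F}(\alpha)$ given by $$f_\alpha(z) = \frac{1-(1-z)^{2\alpha-1}}{2\alpha-1} + \overline{\frac{1 - (1-z)^{2\alpha-1}(1 + z(2\alpha-1))}{2\alpha(2\alpha-1)}} \quad (\alpha \ne 0, 1/2),$$ $$f_0(z) = \frac{z}{1-z} + \overline{\frac{z}{1-z} + \log(1-z)}, \qquad f_{1/2}(z) = -\log(1-z) - \overline{\left(z + \log(1-z)\right)},$$ and for its rotations.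
   Context: $\mathbb{D} = \{z \in \mathbb{C} : |z| < 1\}$. For $\alpha \ge -1/2$, $\mathcal{F}(\alpha)$ denotes the set of complex-valued harmonic functions $f = h + \overline{g}$ on $\mathbb{D}$, with $h, g$ analytic in $\mathbb{D}$ normalized by $h(0) = g(0) = 0$, $h'(0) = 1$, such that $\operatorname{Re}\left(1 + \frac{z h''(z)}{h'(z)}\right) > \alpha$ for all $z \in \mathbb{D}$ and, for some real constant $\theta$, $g'(z) = e^{i\theta} z h'(z)$ for all $z \in \mathbb{D}$. Logarithms and powers of $1-z$ use the principal branch on $\mathbb{D}$. *)

theory Defs
  imports "HOL-Analysis.Analysis"
begin

definition taylor_coeff :: "(complex \<Rightarrow> complex) \<Rightarrow> nat \<Rightarrow> complex" where
  "taylor_coeff f n = (deriv ^^ n) f 0 / of_nat (fact n)"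

text \<open>Membership of the harmonic function f = h + conj g in the class F(alpha),
  expressed through its (normalized) analytic and co-analytic parts h, g.\<close>
definition in_F :: "real \<Rightarrow> (complex \<Rightarrow> complex) \<Rightarrow> (complex \<Rightarrow> complex) \<Rightarrow> bool" where
  "in_F \<alpha> h g \<longleftrightarrow>
     h holomorphic_on ball 0 1 \<and> g holomorphic_on ball 0 1 \<and>
     h 0 = 0 \<and> g 0 = 0 \<and> deriv h 0 = 1 \<and>
     (\<forall>z\<in>ball 0 1. deriv h z \<noteq> 0 \<and>
        Re (1 + z * deriv (deriv h) z / deriv h z) > \<alpha>) \<and>
     (\<exists>\<theta>::real. \<forall>z\<in>ball 0 1. deriv g z = exp (\<i> * of_real \<theta>) * z * deriv h z)"

definition A_coef :: "nat \<Rightarrow> real \<Rightarrow> real" where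
  "A_coef n \<alpha> = (\<Prod>j=2..n. real j - 2 * \<alpha>) / fact n"

text \<open>The extremal function f_alpha = h_alpha + conj g_alpha (principal branches).\<close>
definition h_ext :: "real \<Rightarrow> complex \<Rightarrow> complex" where
  "h_ext \<alpha> z =
     (if \<alpha> = 0 then z / (1 - z)
      else if \<alpha> = 1/2 then - Ln (1 - z)
      else (1 - (1 - z) powr of_real (2*\<alpha> - 1)) / of_real (2*\<alpha> - 1))"

definition g_ext :: "real \<Rightarrow> complex \<Rightarrow> complex" where
  "g_ext \<alpha> z =
     (if \<alpha> = 0 then z / (1 - z) + Ln (1 - z)
      else if \<alpha> = 1/2 then - (z + Ln (1 - z))
      else (1 - (1 - z) powr of_real (2*\<alpha> - 1) * (1 + z * of_real (2*\<alpha> - 1)))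
             / of_real (2*\<alpha> * (2*\<alpha> - 1)))"

end

theory Submission
  imports Defs "HOL-Complex_Analysis.Complex_Analysis"
begin

text \<open>
  Write 1 + z h''/h' = \<alpha> + (1 - \<alpha>) p, so that Re p > 0 and p(0) = 1. Caratheodory's
  lemma |p_k| \<le> 2 turns z h'' = (1 - \<alpha>)(p - 1) h' into the recursion
  n(n-1) a_n = \<Sum>_{i<n} q_i (n-i) a_{n-i} with |q_i| \<le> 2(1 - \<alpha>), whose majorant, obtained
  by taking every q_i equal to 2(1 - \<alpha>), is exactly A_n(\<alpha>). The shear relation
  g' = e^{i\<theta>} z h' gives n |b_n| = (n-1) |a_{n-1}|, hence the bound for b_n.
  For f_\<alpha> one has h_\<alpha>' = (1 - z)^{2\<alpha>-2}, which solves (1 - z) h'' = (2 - 2\<alpha>) h' and so has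
  a_n = A_n(\<alpha>); rotations preserve the class and the moduli of all coefficients.
  Caratheodory's lemma itself is proved by averaging p over the k-th roots of unity,
  which kills the coefficients 1, ..., k-1, and applying Cauchy's estimate to the Cayley
  transform (P - 1)/(P + 1) of the average, whose k-th coefficient is p_k/2.
\<close>

unbundle no vec_syntax

section \<open>Holomorphic functions on the unit disc and their power series\<close>

lemma eventually_nhds_ball:
  assumes "x \<in> ball c r" "\<And>z. z \<in> ball c r \<Longrightarrow> P z"
  shows "eventually P (nhds x)"
  using eventually_nhds_in_open[OF open_ball assms(1)] by (rule eventually_mono) (use assms(2) in auto)

lemma mult_mem_unit_ball:
  fixes u z :: "'a::real_normed_div_algebra"
  shows "norm u \<le> 1 \<Longrightarrow> z \<in> ball 0 1 \<Longrightarrow> u * z \<in> ball 0 1"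
  using mult_right_mono[of "norm u" 1 "norm z"] by (auto simp: norm_mult)

lemma deriv_deriv_eqI:
  assumes "open S" "z \<in> S" and f': "\<And>w. w \<in> S \<Longrightarrow> (f has_field_derivative F w) (at w)"
    and F': "(F has_field_derivative F') (at z)"
  shows "deriv (deriv f) z = F'"
proof -
  have "eventually (\<lambda>w. deriv f w = F w) (nhds z)"
    using eventually_nhds_in_open[OF assms(1,2)] by (rule eventually_mono) (use f' DERIV_imp_deriv in blast)
  then have "deriv (deriv f) z = deriv F z" by (rule deriv_cong_ev) simp
  then show ?thesis using DERIV_imp_deriv[OF F'] by simp
qed

lemma has_field_derivative_compose_scale:
  assumes hol: "f holomorphic_on ball 0 1" and u: "norm u \<le> 1" and z: "z \<in> ball 0 1"
  shows "((\<lambda>w. c * f (u * w)) has_field_derivative c * u * deriv f (u * z)) (at z)"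
proof -
  have "(f has_field_derivative deriv f (u * z)) (at (u * z))"
    using hol mult_mem_unit_ball[OF u z] by (simp add: holomorphic_derivI)
  moreover have "((\<lambda>w. u * w) has_field_derivative u) (at z)"
    using DERIV_cmult[OF DERIV_ident, of u] by simp
  ultimately have "((\<lambda>w. c * f (u * w)) has_field_derivative c * (deriv f (u * z) * u)) (at z)"
    by (intro DERIV_cmult DERIV_chain2[where g="\<lambda>w. u * w"])
  moreover have "c * (deriv f (u * z) * u) = c * u * deriv f (u * z)" by (simp add: mult_ac)
  ultimately show ?thesis by (rule DERIV_cong)
qed

lemma holomorphic_on_compose_scale:
  assumes "f holomorphic_on ball 0 1" "norm u \<le> 1"
  shows "(\<lambda>w. c * f (u * w)) holomorphic_on ball 0 1"
  unfolding holomorphic_on_open[OF open_ball] using has_field_derivative_compose_scale[OF assms] by blast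

lemma deriv_deriv_compose_scale:
  assumes hol: "f holomorphic_on ball 0 1" and u: "norm u \<le> 1" and z: "z \<in> ball 0 1"
  shows "deriv (deriv (\<lambda>w. c * f (u * w))) z = c * u * u * deriv (deriv f) (u * z)"
  using deriv_deriv_eqI[OF open_ball z has_field_derivative_compose_scale[OF hol u]
      has_field_derivative_compose_scale[OF holomorphic_deriv[OF hol open_ball] u z, where c="c * u"]] .

lemma has_fps_expansion_unique_eventually:
  fixes f g :: "complex \<Rightarrow> complex"
  assumes "f has_fps_expansion F" "g has_fps_expansion G" "eventually (\<lambda>z. f z = g z) (nhds 0)"
  shows "F = G"
  using has_fps_expansion_cong[OF assms(3) refl, of F] assms(1,2) fps_expansion_unique_complex
  by blast

lemma holomorphic_on_ball_has_fps_expansion: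
  "f holomorphic_on ball 0 r \<Longrightarrow> 0 < r \<Longrightarrow> f has_fps_expansion fps_expansion f 0"
  by (rule has_fps_expansion_fps_expansion) auto

lemma taylor_coeff_eq_fps_nth: "f has_fps_expansion F \<Longrightarrow> taylor_coeff f n = F $ n"
  using fps_nth_fps_expansion[of f F n] by (simp add: taylor_coeff_def)

lemma taylor_coeff_conv_fps_expansion: "taylor_coeff f n = fps_expansion f 0 $ n"
  by (simp add: taylor_coeff_def fps_expansion_def)

lemma has_fps_expansion_compose_scale:
  fixes f :: "complex \<Rightarrow> complex"
  assumes hol: "f holomorphic_on ball 0 1" and c: "norm c \<le> 1"
  shows "(\<lambda>z. f (c * z)) has_fps_expansion Abs_fps (\<lambda>n. c ^ n * taylor_coeff f n)"
proof -
  have sub: "c * w \<in> ball 0 1" if "w \<in> ball 0 1" for w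
    using mult_mem_unit_ball[OF c that] .
  have "(\<lambda>z. f (c * z)) holomorphic_on ball 0 1"
    using holomorphic_on_compose_gen[OF holomorphic_on_linear hol] sub
    by (auto simp: o_def image_subset_iff)
  then have "(\<lambda>z. f (c * z)) has_fps_expansion fps_expansion (\<lambda>z. f (c * z)) 0"
    by (rule holomorphic_on_ball_has_fps_expansion) simp
  moreover have "(deriv ^^ n) (\<lambda>w. f (c * w)) 0 = c ^ n * (deriv ^^ n) f 0" for n
    using higher_deriv_compose_linear[OF hol, of "ball 0 1" 0 c n] sub by simp
  ultimately show ?thesis
    by (simp add: fps_expansion_def taylor_coeff_def)
qed

lemma taylor_coeff_compose_scale:
  assumes "f holomorphic_on ball 0 1" "norm u \<le> 1"
  shows "taylor_coeff (\<lambda>z. c * f (u * z)) n = c * u ^ n * taylor_coeff f n"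
  using has_fps_expansion_cmult_left[OF has_fps_expansion_compose_scale[OF assms], of c]
  by (simp add: taylor_coeff_eq_fps_nth mult.assoc)

lemma norm_taylor_coeff_le_bound:
  fixes f :: "complex \<Rightarrow> complex"
  assumes hol: "f holomorphic_on ball 0 1" and bound: "\<And>z. z \<in> ball 0 1 \<Longrightarrow> norm (f z) < M"
    and "k > 0"
  shows "norm (taylor_coeff f k) \<le> M"
proof (rule field_le_mult_one_interval)
  fix s :: real assume s: "0 < s" "s < 1"
  define r where "r = root k s"
  have r: "0 < r" "r < 1" "r ^ k = s" using s \<open>k > 0\<close> by (auto simp: r_def)
  have "norm ((deriv ^^ k) f 0) \<le> fact k * M / r ^ k"
  proof (rule Cauchy_higher_deriv_bound[where y=0])
    have "cball 0 r \<subseteq> ball (0::complex) 1" using r by auto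
    then show "f holomorphic_on ball 0 r" "continuous_on (cball 0 r) f"
      using holomorphic_on_subset[OF hol] ball_subset_cball holomorphic_on_imp_continuous_on
      by blast+
  qed (use bound r \<open>k > 0\<close> in auto)
  then have "norm (taylor_coeff f k) \<le> M / s"
    using r by (simp add: taylor_coeff_def norm_divide field_simps)
  then show "s * norm (taylor_coeff f k) \<le> M"
    using s by (simp add: field_simps)
qed

lemma fps_coeff_recursion_of_ode:
  fixes H Q :: "complex fps"
  assumes ode: "fps_X * fps_deriv (fps_deriv H) = Q * fps_deriv H" and Q0: "Q $ 0 = 0" and n: "n \<ge> 2"
  shows "of_nat (n - 1) * of_nat n * H $ n = (\<Sum>i=1..<n. Q $ i * (of_nat (n - i) * H $ (n - i)))"
proof -
  have "of_nat (n - 1) * of_nat n * H $ n = (fps_X * fps_deriv (fps_deriv H)) $ (n - 1)"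
    using n by (simp add: Suc_diff_Suc numeral_2_eq_2 mult.assoc)
  also have "\<dots> = (\<Sum>i=0..n-1. Q $ i * (of_nat (n - i) * H $ (n - i)))"
    unfolding ode fps_mult_nth using n by (intro sum.cong refl) (simp, subst Suc_diff_Suc, auto)
  also have "\<dots> = (\<Sum>i=1..<n. Q $ i * (of_nat (n - i) * H $ (n - i)))"
    using n Q0 by (simp add: atLeast0AtMost atLeastLessThanSuc_atLeastAtMost[symmetric] sum.atLeast_Suc_lessThan)
  finally show ?thesis .
qed

lemma fps_coeff_of_one_minus_X_ode:
  fixes H :: "complex fps"
  assumes "(1 - fps_X) * fps_deriv (fps_deriv H) = fps_const c * fps_deriv H"
  shows "of_nat (Suc (Suc m)) * H $ Suc (Suc m) = (of_nat m + c) * H $ Suc m"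
proof -
  have "of_nat (Suc m) * (of_nat (Suc (Suc m)) * H $ Suc (Suc m)) - of_nat m * (of_nat (Suc m) * H $ Suc m)
        = c * (of_nat (Suc m) * H $ Suc m)"
    using arg_cong[OF assms, of "\<lambda>F. F $ m"] by (cases m) (simp_all add: algebra_simps)
  then have eq: "of_nat (Suc m) * (of_nat (Suc (Suc m)) * H $ Suc (Suc m)) =
                 of_nat (Suc m) * ((of_nat m + c) * H $ Suc m)"
    by (simp add: algebra_simps)
  have nz: "(of_nat (Suc m) :: complex) \<noteq> 0" by (simp only: of_nat_eq_0_iff)
  show ?thesis by (rule iffD1[OF mult_left_cancel[OF nz] eq])
qed

section \<open>Caratheodory's coefficient bound\<close>

lemma sum_powers_root_unity:
  fixes k m :: nat
  assumes "k > 0"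
  shows "(\<Sum>j<k. (exp (2 * of_real pi * \<i> / of_nat k) ^ m) ^ j) = (if k dvd m then of_nat k else 0)"
proof -
  define w where "w = exp (2 * of_real pi * \<i> * of_nat m / of_nat k)"
  have "exp (2 * of_real pi * \<i> / of_nat k) ^ m = w"
    by (simp add: w_def exp_of_nat_mult[symmetric] field_simps)
  moreover have "w ^ k = 1" "w = 1 \<longleftrightarrow> k dvd m"
    using complex_root_unity[of k m] complex_root_unity_eq_1[of k m] assms by (simp_all add: w_def)
  ultimately show ?thesis
    by (simp add: sum_gp_strict)
qed

lemma has_fps_expansion_root_unity_average:
  fixes f :: "complex \<Rightarrow> complex"
  assumes hol: "f holomorphic_on ball 0 1" and "k > 0"
  defines "\<omega> \<equiv> exp (2 * of_real pi * \<i> / of_nat k)"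
  shows "(\<lambda>z. (\<Sum>j<k. f (\<omega> ^ j * z)) / of_nat k)
           has_fps_expansion Abs_fps (\<lambda>m. if k dvd m then taylor_coeff f m else 0)"
proof -
  have "norm (\<omega> ^ j) = 1" for j by (simp add: \<omega>_def norm_power norm_exp_eq_Re)
  then have "(\<lambda>z. (\<Sum>j<k. f (\<omega> ^ j * z)) * inverse (of_nat k)) has_fps_expansion
               (\<Sum>j<k. Abs_fps (\<lambda>m. (\<omega> ^ j) ^ m * taylor_coeff f m)) * fps_const (inverse (of_nat k))"
    by (intro has_fps_expansion_cmult_right has_fps_expansion_sum has_fps_expansion_compose_scale hol)
       simp
  also have "\<dots> = Abs_fps (\<lambda>m. if k dvd m then taylor_coeff f m else 0)"
    using sum_powers_root_unity[OF \<open>k > 0\<close>] \<open>k > 0\<close>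
    by (simp add: fps_eq_iff fps_sum_nth \<omega>_def power_mult[symmetric] mult.commute
        flip: sum_distrib_left)
  finally show ?thesis by (simp add: divide_inverse)
qed

lemma fps_cayley_coeff:
  fixes P W :: "'a::field_char_0 fps"
  assumes P0: "P $ 0 = 1" and gap: "\<And>i. 0 < i \<Longrightarrow> i < k \<Longrightarrow> P $ i = 0"
    and cayley: "P - 1 = W * (P + 1)" and "k > 0"
  shows "P $ k = 2 * W $ k"
proof -
  have mult_nth: "(W * (P + 1)) $ m = 2 * W $ m" if "\<And>i. i < m \<Longrightarrow> W $ i = 0" for m
  proof -
    have "(W * (P + 1)) $ m = W $ m * (P + 1) $ 0 + (\<Sum>i<m. W $ i * (P + 1) $ (m - i))"
      by (simp add: fps_mult_nth atLeast0AtMost lessThan_Suc_atMost[symmetric])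
    then show ?thesis using that P0 by simp
  qed
  have W_gap: "\<forall>i<m. W $ i = 0" if "m \<le> k" for m
    using that
  proof (induction m)
    case (Suc m)
    then have "(P - 1) $ m = 0"
      using P0 gap[of m] by (cases "m = 0") auto
    then have "2 * W $ m = 0"
      using Suc mult_nth[of m] by (simp add: cayley)
    then show ?case using Suc less_Suc_eq by auto
  qed simp
  have "P $ k = (P - 1) $ k" using \<open>k > 0\<close> by simp
  also have "\<dots> = 2 * W $ k" using mult_nth W_gap[of k] by (simp add: cayley)
  finally show ?thesis .
qed

lemma cayley_coeff_bound:
  fixes P :: "complex \<Rightarrow> complex"
  assumes hol_P: "P holomorphic_on ball 0 1" and Re_P: "\<And>z. z \<in> ball 0 1 \<Longrightarrow> Re (P z) > 0"
    and P_exp: "P has_fps_expansion PF" and PF0: "PF $ 0 = 1"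
    and gap: "\<And>i. 0 < i \<Longrightarrow> i < k \<Longrightarrow> PF $ i = 0" and "k > 0"
  shows "norm (PF $ k) \<le> 2"
proof -
  define W where "W z = (P z - 1) / (P z + 1)" for z
  have P_plus_1: "P z + 1 \<noteq> 0" if "z \<in> ball 0 1" for z
  proof -
    have "Re (P z + 1) > 0" using Re_P[OF that] by simp
    then show ?thesis by (metis less_irrefl zero_complex.sel(1))
  qed
  have hol_W: "W holomorphic_on ball 0 1"
    unfolding W_def by (intro holomorphic_intros hol_P) (use P_plus_1 in auto)
  have norm_W: "norm (W z) < 1" if "z \<in> ball 0 1" for z
  proof -
    have "norm (P z - 1) ^ 2 < norm (P z + 1) ^ 2"
      using Re_P[OF that] unfolding cmod_power2 by (simp add: power2_eq_square algebra_simps)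
    then show ?thesis
      using P_plus_1[OF that] by (simp add: W_def norm_divide divide_less_eq power_less_imp_less_base)
  qed
  define WF where "WF = fps_expansion W 0"
  have W_exp: "W has_fps_expansion WF"
    unfolding WF_def by (rule holomorphic_on_ball_has_fps_expansion[OF hol_W]) simp
  have "PF - 1 = WF * (PF + 1)"
  proof (rule has_fps_expansion_unique_eventually)
    show "(\<lambda>z. P z - 1) has_fps_expansion PF - 1" "(\<lambda>z. W z * (P z + 1)) has_fps_expansion WF * (PF + 1)"
      by (intro fps_expansion_intros P_exp W_exp)+
    show "\<forall>\<^sub>F z in nhds 0. P z - 1 = W z * (P z + 1)"
      by (rule eventually_nhds_ball[of 0 0 1]) (use P_plus_1 in \<open>auto simp: W_def\<close>)
  qed
  then have "PF $ k = 2 * WF $ k"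
    by (rule fps_cayley_coeff[rotated 2]) (use PF0 gap \<open>k > 0\<close> in auto)
  moreover have "norm (WF $ k) \<le> 1"
    using norm_taylor_coeff_le_bound[OF hol_W norm_W \<open>k > 0\<close>] taylor_coeff_eq_fps_nth[OF W_exp] by simp
  ultimately show ?thesis by (simp add: norm_mult)
qed

lemma caratheodory_coeff_bound:
  fixes p :: "complex \<Rightarrow> complex"
  assumes hol: "p holomorphic_on ball 0 1" and p0: "p 0 = 1"
    and Re_pos: "\<And>z. z \<in> ball 0 1 \<Longrightarrow> Re (p z) > 0" and "k > 0"
  shows "norm (taylor_coeff p k) \<le> 2"
proof -
  define \<omega> where "\<omega> = exp (2 * of_real pi * \<i> / of_nat k)"
  define P where "P z = (\<Sum>j<k. p (\<omega> ^ j * z)) / of_nat k" for z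
  define PF where "PF = Abs_fps (\<lambda>m. if k dvd m then taylor_coeff p m else 0)"
  have P_exp: "P has_fps_expansion PF"
    unfolding P_def[abs_def] PF_def \<omega>_def by (rule has_fps_expansion_root_unity_average[OF hol \<open>k > 0\<close>])
  have rot_in_ball: "\<omega> ^ j * z \<in> ball 0 1" if "z \<in> ball 0 1" for z j
    using that by (intro mult_mem_unit_ball) (simp_all add: \<omega>_def norm_power norm_exp_eq_Re)
  have hol_P: "P holomorphic_on ball 0 1"
    unfolding P_def
    by (intro holomorphic_intros holomorphic_on_compose[OF _ holomorphic_on_subset[OF hol], unfolded o_def])
       (use rot_in_ball in auto)
  have Re_P: "Re (P z) > 0" if "z \<in> ball 0 1" for z
  proof -
    have "(\<Sum>j<k. Re (p (\<omega> ^ j * z))) > 0"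
      using \<open>k > 0\<close> by (intro sum_pos) (auto intro: Re_pos rot_in_ball that)
    then show ?thesis using \<open>k > 0\<close> by (simp add: P_def Re_sum)
  qed
  have "norm (PF $ k) \<le> 2"
    by (rule cayley_coeff_bound[OF hol_P Re_P P_exp]) (use p0 \<open>k > 0\<close> in \<open>auto simp: PF_def taylor_coeff_def\<close>)
  then show ?thesis by (simp add: PF_def)
qed

lemma norm_taylor_coeff_le_of_Re_gt:
  fixes q :: "complex \<Rightarrow> complex"
  assumes hol: "q holomorphic_on ball 0 1" and q0: "q 0 = 0"
    and Re_q: "\<And>z. z \<in> ball 0 1 \<Longrightarrow> Re (q z) > - c" and "k > 0"
  shows "norm (taylor_coeff q k) \<le> 2 * c"
proof -
  have "c > 0" using Re_q[of 0] q0 by simp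
  define p where "p z = 1 + q z / of_real c" for z
  have hol_p: "p holomorphic_on ball 0 1"
    unfolding p_def using \<open>c > 0\<close> by (intro holomorphic_intros hol) auto
  have Re_p: "Re (p z) > 0" if "z \<in> ball 0 1" for z
    using Re_q[OF that] \<open>c > 0\<close> by (simp add: p_def Re_divide_of_real field_simps)
  have q_eq: "q = (\<lambda>z. of_real c * (p z - 1))"
    using \<open>c > 0\<close> by (intro ext) (simp add: p_def)
  have "(\<lambda>z. of_real c * (p z - 1)) has_fps_expansion fps_const (of_real c) * (fps_expansion p 0 - 1)"
    by (intro fps_expansion_intros holomorphic_on_ball_has_fps_expansion[OF hol_p]) simp
  then have "taylor_coeff q k = (fps_const (of_real c) * (fps_expansion p 0 - 1)) $ k"
    unfolding q_eq by (rule taylor_coeff_eq_fps_nth)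
  then have "norm (taylor_coeff q k) = c * norm (taylor_coeff p k)"
    using \<open>k > 0\<close> \<open>c > 0\<close> by (simp add: taylor_coeff_conv_fps_expansion norm_mult)
  also have "\<dots> \<le> c * 2"
    using caratheodory_coeff_bound[OF hol_p _ Re_p \<open>k > 0\<close>] \<open>c > 0\<close> q0
    by (simp add: p_def[of 0])
  finally show ?thesis by simp
qed

section \<open>Coefficient bounds for the class F(\<alpha>)\<close>

lemma A_coef_1 [simp]: "A_coef 1 \<alpha> = 1"
  by (simp add: A_coef_def)

lemma A_coef_Suc:
  assumes "n \<ge> 1"
  shows "real (Suc n) * A_coef (Suc n) \<alpha> = (real (Suc n) - 2 * \<alpha>) * A_coef n \<alpha>"
proof -
  have "(\<Prod>j=2..Suc n. real j - 2 * \<alpha>) = (real (Suc n) - 2 * \<alpha>) * (\<Prod>j=2..n. real j - 2 * \<alpha>)"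
    using assms by (subst prod.nat_ivl_Suc') auto
  then show ?thesis
    by (simp add: A_coef_def)
qed

lemma A_coef_pos:
  assumes "\<alpha> < 1"
  shows "A_coef n \<alpha> > 0"
  unfolding A_coef_def using assms by (intro divide_pos_pos prod_pos) auto

lemma A_coef_weighted_sum:
  assumes "n \<ge> 1"
  shows "2 * (1 - \<alpha>) * (\<Sum>j=1..<n. real j * A_coef j \<alpha>) = (real n - 1) * real n * A_coef n \<alpha>"
  using assms
proof (induction n rule: dec_induct)
  case (step n)
  have "2 * (1 - \<alpha>) * (\<Sum>j=1..<Suc n. real j * A_coef j \<alpha>)
        = real n * ((real (Suc n) - 2 * \<alpha>) * A_coef n \<alpha>)"
    using step by (simp add: algebra_simps)
  also have "\<dots> = (real (Suc n) - 1) * real (Suc n) * A_coef (Suc n) \<alpha>"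
    using A_coef_Suc[OF step(1), of \<alpha>] by simp
  finally show ?case .
qed simp

lemma A_coef_ratio:
  assumes "\<alpha> < 1" "n \<ge> 2"
  shows "(real n - 1) / (real n - 2 * \<alpha>) * A_coef n \<alpha> = real (n - 1) * A_coef (n - 1) \<alpha> / real n"
proof -
  obtain m where n: "n = Suc m" and "m \<ge> 1" using assms(2) by (cases n) auto
  then have "A_coef n \<alpha> = (real n - 2 * \<alpha>) * A_coef m \<alpha> / real n"
    using A_coef_Suc[of m \<alpha>] by (simp add: field_simps)
  moreover have "real n - 2 * \<alpha> > 0" using assms by simp
  ultimately show ?thesis using n by simp
qed

lemma norm_le_A_coef_if_recursion:
  fixes a q :: "nat \<Rightarrow> complex"
  assumes "\<alpha> < 1" and a1: "a 1 = 1" and q: "\<And>i. i \<ge> 1 \<Longrightarrow> norm (q i) \<le> 2 * (1 - \<alpha>)"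
    and rec: "\<And>n. n \<ge> 2 \<Longrightarrow>
      of_nat (n - 1) * of_nat n * a n = (\<Sum>i=1..<n. q i * (of_nat (n - i) * a (n - i)))"
    and "n \<ge> 1"
  shows "norm (a n) \<le> A_coef n \<alpha>"
  using \<open>n \<ge> 1\<close>
proof (induction n rule: less_induct)
  case (less n)
  show ?case
  proof (cases "n = 1")
    case False
    then have n: "n \<ge> 2" using less.prems by simp
    have "(real n - 1) * real n * norm (a n) = norm (of_nat (n - 1) * of_nat n * a n)"
      unfolding norm_mult norm_of_nat using n by (simp add: of_nat_diff)
    also have "\<dots> \<le> (\<Sum>i=1..<n. norm (q i) * (real (n - i) * norm (a (n - i))))"
      unfolding rec[OF n] by (rule order_trans[OF norm_sum]) (simp only: norm_mult norm_of_nat order_refl)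
    also have "\<dots> \<le> (\<Sum>i=1..<n. 2 * (1 - \<alpha>) * (real (n - i) * A_coef (n - i) \<alpha>))"
      using less.IH q \<open>\<alpha> < 1\<close>
      by (intro sum_mono mult_mono mult_left_mono) auto
    also have "\<dots> = 2 * (1 - \<alpha>) * (\<Sum>i=1..<n. real (n - i) * A_coef (n - i) \<alpha>)"
      by (simp add: sum_distrib_left)
    also have "(\<Sum>i=1..<n. real (n - i) * A_coef (n - i) \<alpha>) = (\<Sum>j=1..<n. real j * A_coef j \<alpha>)"
      by (subst (2) sum.atLeastLessThan_rev) (simp add: Suc_diff_Suc)
    also have "2 * (1 - \<alpha>) * \<dots> = (real n - 1) * real n * A_coef n \<alpha>"
      using A_coef_weighted_sum n by simp
    finally show ?thesis using n by simp
  qed (metis a1 A_coef_1 norm_one order_refl)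
qed

lemma in_F_quotient_has_fps_expansion:
  assumes F: "in_F \<alpha> h g"
  obtains Q where "(\<lambda>z. z * deriv (deriv h) z / deriv h z) has_fps_expansion Q" and "Q $ 0 = 0"
    and "\<And>i. i \<ge> 1 \<Longrightarrow> norm (Q $ i) \<le> 2 * (1 - \<alpha>)"
proof -
  from F have hol_h: "h holomorphic_on ball 0 1"
    and nz: "\<And>z. z \<in> ball 0 1 \<Longrightarrow> deriv h z \<noteq> 0"
    and Re_h: "\<And>z. z \<in> ball 0 1 \<Longrightarrow> Re (1 + z * deriv (deriv h) z / deriv h z) > \<alpha>"
    unfolding in_F_def by auto
  define q where "q z = z * deriv (deriv h) z / deriv h z" for z
  have hol_q: "q holomorphic_on ball 0 1"
    unfolding q_def by (intro holomorphic_intros hol_h) (use nz in auto)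
  have Re_q: "Re (q z) > - (1 - \<alpha>)" if "z \<in> ball 0 1" for z
    using Re_h[OF that] by (simp add: q_def)
  show thesis
  proof (rule that)
    show "(\<lambda>z. z * deriv (deriv h) z / deriv h z) has_fps_expansion fps_expansion q 0"
      using holomorphic_on_ball_has_fps_expansion[OF hol_q] by (simp add: q_def[abs_def])
    show "fps_expansion q 0 $ 0 = 0"
      by (simp add: fps_expansion_def q_def)
    show "norm (fps_expansion q 0 $ i) \<le> 2 * (1 - \<alpha>)" if "i \<ge> 1" for i
      using norm_taylor_coeff_le_of_Re_gt[OF hol_q _ Re_q, of i] that
      by (simp add: taylor_coeff_conv_fps_expansion q_def[of 0])
  qed
qed

lemma in_F_coeff_recursion:
  assumes F: "in_F \<alpha> h g"
  obtains q :: "nat \<Rightarrow> complex"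
  where "\<And>i. i \<ge> 1 \<Longrightarrow> norm (q i) \<le> 2 * (1 - \<alpha>)"
    and "\<And>n. n \<ge> 2 \<Longrightarrow> of_nat (n - 1) * of_nat n * taylor_coeff h n =
                         (\<Sum>i=1..<n. q i * (of_nat (n - i) * taylor_coeff h (n - i)))"
proof -
  from F have hol_h: "h holomorphic_on ball 0 1" and nz: "\<And>z. z \<in> ball 0 1 \<Longrightarrow> deriv h z \<noteq> 0"
    unfolding in_F_def by auto
  obtain Q where Q_exp: "(\<lambda>z. z * deriv (deriv h) z / deriv h z) has_fps_expansion Q"
    and Q0: "Q $ 0 = 0" and Q_bound: "\<And>i. i \<ge> 1 \<Longrightarrow> norm (Q $ i) \<le> 2 * (1 - \<alpha>)"
    using in_F_quotient_has_fps_expansion[OF F] by blast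
  define H where "H = fps_expansion h 0"
  have H_exp: "h has_fps_expansion H"
    unfolding H_def by (rule holomorphic_on_ball_has_fps_expansion[OF hol_h]) simp
  have "fps_X * fps_deriv (fps_deriv H) = Q * fps_deriv H"
  proof (rule has_fps_expansion_unique_eventually)
    show "(\<lambda>z. z * deriv (deriv h) z) has_fps_expansion fps_X * fps_deriv (fps_deriv H)"
         "(\<lambda>z. z * deriv (deriv h) z / deriv h z * deriv h z) has_fps_expansion Q * fps_deriv H"
      by (intro fps_expansion_intros H_exp Q_exp)+
    show "\<forall>\<^sub>F z in nhds 0. z * deriv (deriv h) z = z * deriv (deriv h) z / deriv h z * deriv h z"
      by (rule eventually_nhds_ball[of 0 0 1]) (use nz in auto)
  qed
  from fps_coeff_recursion_of_ode[OF this Q0] show thesis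
    by (intro that[of "\<lambda>i. Q $ i"] Q_bound) (simp_all add: taylor_coeff_eq_fps_nth[OF H_exp])
qed

lemma in_F_norm_coeff_h_le:
  assumes F: "in_F \<alpha> h g" and "\<alpha> < 1" and "n \<ge> 1"
  shows "norm (taylor_coeff h n) \<le> A_coef n \<alpha>"
proof -
  have "taylor_coeff h 1 = 1"
    using F by (simp add: in_F_def taylor_coeff_def)
  moreover obtain q where "\<And>i. i \<ge> 1 \<Longrightarrow> norm (q i) \<le> 2 * (1 - \<alpha>)"
    and "\<And>n. n \<ge> 2 \<Longrightarrow> of_nat (n - 1) * of_nat n * taylor_coeff h n =
                         (\<Sum>i=1..<n. q i * (of_nat (n - i) * taylor_coeff h (n - i)))"
    using in_F_coeff_recursion[OF F] by blast
  ultimately show ?thesis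
    by (rule norm_le_A_coef_if_recursion[OF \<open>\<alpha> < 1\<close>]) (use \<open>n \<ge> 1\<close> in auto)
qed

lemma in_F_norm_coeff_g:
  assumes F: "in_F \<alpha> h g" and "n \<ge> 1"
  shows "real n * norm (taylor_coeff g n) = real (n - 1) * norm (taylor_coeff h (n - 1))"
proof -
  from F have hol_h: "h holomorphic_on ball 0 1" and hol_g: "g holomorphic_on ball 0 1"
    unfolding in_F_def by auto
  from F obtain \<theta> :: real
    where shear: "\<And>z. z \<in> ball 0 1 \<Longrightarrow> deriv g z = exp (\<i> * of_real \<theta>) * z * deriv h z"
    unfolding in_F_def by blast
  define c where "c = exp (\<i> * of_real \<theta>)"
  define H where "H = fps_expansion h 0"
  define G where "G = fps_expansion g 0"
  have H_exp: "h has_fps_expansion H" and G_exp: "g has_fps_expansion G"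
    unfolding H_def G_def using hol_h hol_g holomorphic_on_ball_has_fps_expansion by auto
  have ode: "fps_deriv G = fps_const c * (fps_X * fps_deriv H)"
  proof (rule has_fps_expansion_unique_eventually)
    show "deriv g has_fps_expansion fps_deriv G"
         "(\<lambda>z. c * (z * deriv h z)) has_fps_expansion fps_const c * (fps_X * fps_deriv H)"
      by (intro fps_expansion_intros G_exp H_exp)+
    show "\<forall>\<^sub>F z in nhds 0. deriv g z = c * (z * deriv h z)"
      by (rule eventually_nhds_ball[of 0 0 1]) (auto simp: shear c_def mult.assoc)
  qed
  obtain m where n: "n = Suc m" using \<open>n \<ge> 1\<close> by (cases n) auto
  have "of_nat n * G $ n = fps_deriv G $ m" by (simp add: n)
  also have "\<dots> = c * (of_nat m * H $ m)" unfolding ode by (cases m) simp_all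
  finally have "of_nat n * G $ n = c * (of_nat (n - 1) * H $ (n - 1))" by (simp add: n)
  then have "norm (of_nat n * G $ n) = norm (of_nat (n - 1) * H $ (n - 1))"
    by (simp add: norm_mult c_def norm_exp_eq_Re)
  then show ?thesis
    by (simp add: norm_mult taylor_coeff_eq_fps_nth[OF H_exp] taylor_coeff_eq_fps_nth[OF G_exp])
qed

lemma in_F_norm_coeff_g_le:
  assumes F: "in_F \<alpha> h g" and "\<alpha> < 1" and n: "n \<ge> 2"
  shows "norm (taylor_coeff g n) \<le> (real n - 1) / (real n - 2 * \<alpha>) * A_coef n \<alpha>"
proof -
  have "real n * norm (taylor_coeff g n) \<le> real (n - 1) * A_coef (n - 1) \<alpha>"
    using in_F_norm_coeff_g[OF F] in_F_norm_coeff_h_le[OF F \<open>\<alpha> < 1\<close>, of "n - 1"] n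
    by (simp add: mult_left_mono)
  then show ?thesis
    unfolding A_coef_ratio[OF \<open>\<alpha> < 1\<close> n] using n by (simp add: pos_le_divide_eq mult.commute)
qed

lemma in_F_norm_coeff_g_eq:
  assumes F: "in_F \<alpha> h g" and "\<alpha> < 1" and n: "n \<ge> 2"
    and h_extremal: "norm (taylor_coeff h (n - 1)) = A_coef (n - 1) \<alpha>"
  shows "norm (taylor_coeff g n) = (real n - 1) / (real n - 2 * \<alpha>) * A_coef n \<alpha>"
proof -
  have "real n * norm (taylor_coeff g n) = real (n - 1) * A_coef (n - 1) \<alpha>"
    using in_F_norm_coeff_g[OF F] h_extremal n by simp
  then show ?thesis
    unfolding A_coef_ratio[OF \<open>\<alpha> < 1\<close> n] using n by (simp add: eq_divide_eq mult.commute)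
qed

lemma in_F_compose_scale:
  assumes F: "in_F \<alpha> h g" and u: "norm u \<le> 1" and vu: "v * u = 1"
    and u_cube: "\<And>\<theta>::real. \<exists>\<theta>'::real. exp (\<i> * of_real \<theta>') = exp (\<i> * of_real \<theta>) * u ^ 3"
  shows "in_F \<alpha> (\<lambda>w. v * h (u * w)) (\<lambda>w. u * g (u * w))" (is "in_F \<alpha> ?hr ?gr")
proof -
  from F have hol_h: "h holomorphic_on ball 0 1" and hol_g: "g holomorphic_on ball 0 1"
    and h0: "h 0 = 0" "deriv h 0 = 1" and g0: "g 0 = 0"
    and nz: "\<And>z. z \<in> ball 0 1 \<Longrightarrow> deriv h z \<noteq> 0"
    and Re_h: "\<And>z. z \<in> ball 0 1 \<Longrightarrow> Re (1 + z * deriv (deriv h) z / deriv h z) > \<alpha>"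
    unfolding in_F_def by auto
  from F obtain \<theta> :: real
    where shear: "\<And>z. z \<in> ball 0 1 \<Longrightarrow> deriv g z = exp (\<i> * of_real \<theta>) * z * deriv h z"
    unfolding in_F_def by blast
  obtain \<theta>' :: real where \<theta>': "exp (\<i> * of_real \<theta>') = exp (\<i> * of_real \<theta>) * u ^ 3"
    using u_cube by blast
  note uz = mult_mem_unit_ball[OF u]
  have hr': "deriv ?hr z = deriv h (u * z)" and hr'': "deriv (deriv ?hr) z = u * deriv (deriv h) (u * z)"
    and gr': "deriv ?gr z = u * u * deriv g (u * z)" if "z \<in> ball 0 1" for z
    using DERIV_imp_deriv[OF has_field_derivative_compose_scale[OF hol_h u that, of v]]
      DERIV_imp_deriv[OF has_field_derivative_compose_scale[OF hol_g u that, of u]]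
      deriv_deriv_compose_scale[OF hol_h u that, of v]
    by (simp_all add: vu)
  show ?thesis
    unfolding in_F_def
  proof (intro conjI ballI exI[of _ \<theta>'])
    show "?hr holomorphic_on ball 0 1" "?gr holomorphic_on ball 0 1"
      by (intro holomorphic_on_compose_scale hol_h hol_g u)+
    show "?hr 0 = 0" "?gr 0 = 0" "deriv ?hr 0 = 1"
      using h0 g0 hr'[of 0] by simp_all
    fix z :: complex assume z: "z \<in> ball 0 1"
    show "deriv ?hr z \<noteq> 0" using nz[OF uz[OF z]] hr'[OF z] by simp
    show "Re (1 + z * deriv (deriv ?hr) z / deriv ?hr z) > \<alpha>"
      using Re_h[OF uz[OF z]] unfolding hr'[OF z] hr''[OF z] mult.assoc[symmetric] mult.commute[of z u] .
    have "deriv ?gr z = exp (\<i> * of_real \<theta>) * u ^ 3 * z * deriv h (u * z)"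
      unfolding gr'[OF z] shear[OF uz[OF z]] power3_eq_cube by (simp only: ac_simps)
    then show "deriv ?gr z = exp (\<i> * of_real \<theta>') * z * deriv ?hr z"
      by (simp only: \<theta>' hr'[OF z])
  qed
qed

lemma in_F_rotate:
  assumes "in_F \<alpha> h g"
  shows "in_F \<alpha> (\<lambda>z. exp (- \<i> * of_real \<phi>) * h (exp (\<i> * of_real \<phi>) * z))
                 (\<lambda>z. exp (\<i> * of_real \<phi>) * g (exp (\<i> * of_real \<phi>) * z))"
proof (rule in_F_compose_scale[OF assms])
  show "norm (exp (\<i> * of_real \<phi>)) \<le> 1" "exp (- \<i> * of_real \<phi>) * exp (\<i> * of_real \<phi>) = 1"
    by (simp_all add: norm_exp_eq_Re flip: exp_add)
  show "\<exists>\<theta>'::real. exp (\<i> * of_real \<theta>') = exp (\<i> * of_real \<theta>) * exp (\<i> * of_real \<phi>) ^ 3" for \<theta>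
    by (rule exI[of _ "\<theta> + 3 * \<phi>"]) (simp add: algebra_simps flip: exp_add exp_of_nat_mult)
qed

section \<open>The extremal functions\<close>

lemma one_minus_notin_nonpos_Reals: "(z::complex) \<in> ball 0 1 \<Longrightarrow> 1 - z \<notin> \<real>\<^sub>\<le>\<^sub>0"
  using complex_Re_le_cmod[of z] by (auto simp: complex_nonpos_Reals_iff)

lemma one_minus_nonzero: "(z::complex) \<in> ball 0 1 \<Longrightarrow> 1 - z \<noteq> 0"
  by (auto simp: dist_norm)

lemma has_field_derivative_one_minus_powr:
  fixes z s :: complex
  assumes "z \<in> ball 0 1"
  shows "((\<lambda>z. (1 - z) powr s) has_field_derivative - (s * (1 - z) powr (s - 1))) (at z)"
proof -
  have "((\<lambda>z. (1 - z) powr s) has_field_derivative (s * (1 - z) powr (s - 1)) * (- 1)) (at z)"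
    by (rule DERIV_chain2[where f="\<lambda>w. w powr s" and g="\<lambda>z. 1 - z",
          OF has_field_derivative_powr[OF one_minus_notin_nonpos_Reals[OF assms]]])
       (intro derivative_eq_intros, auto)
  then show ?thesis by simp
qed

lemma has_field_derivative_one_minus_Ln:
  fixes z :: complex
  assumes "z \<in> ball 0 1"
  shows "((\<lambda>z. Ln (1 - z)) has_field_derivative - inverse (1 - z)) (at z)"
proof -
  have "((\<lambda>z. Ln (1 - z)) has_field_derivative inverse (1 - z) * (- 1)) (at z)"
    by (rule DERIV_chain2[where f=Ln and g="\<lambda>z. 1 - z",
          OF has_field_derivative_Ln[OF one_minus_notin_nonpos_Reals[OF assms]]])
       (intro derivative_eq_intros, auto)
  then show ?thesis by simp
qed

lemma powr_eq_mult_powr_minus_one: "(w::complex) \<noteq> 0 \<Longrightarrow> w powr s = w * w powr (s - 1)"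
  using powr_add[of w "s - 1" 1] by (simp add: mult.commute)

lemma Re_div_one_minus_gt: "norm (w::complex) < 1 \<Longrightarrow> Re (w / (1 - w)) > - 1/2"
proof -
  assume w: "norm w < 1"
  define x where "x = Re w"
  define y where "y = Im w"
  have xy: "x^2 + y^2 < 1"
    using w unfolding x_def y_def cmod_power2[symmetric] by (simp add: power_less_one_iff)
  have "Re (w / (1 - w)) = (x * (1 - x) - y * y) / ((1 - x)^2 + y^2)"
    unfolding Re_divide x_def y_def by (simp add: power2_eq_square)
  moreover have "(1 - x)^2 + y^2 > 0"
  proof -
    have "x^2 < 1" using xy zero_le_power2[of y] by linarith
    then have "x < 1" by (simp add: abs_square_less_1 abs_less_iff)
    then show ?thesis by (simp add: add_pos_nonneg)
  qed
  moreover have "x * (1 - x) - y * y > - 1/2 * ((1 - x)^2 + y^2)"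
    using xy by (simp add: power2_eq_square algebra_simps)
  ultimately show ?thesis by (simp add: pos_less_divide_eq)
qed

definition dh_ext :: "real \<Rightarrow> complex \<Rightarrow> complex" where
  "dh_ext \<alpha> z = (1 - z) powr of_real (2 * \<alpha> - 2)"

lemma dh_ext_0 [simp]: "dh_ext \<alpha> 0 = 1"
  by (simp add: dh_ext_def)

lemma dh_ext_nonzero: "z \<in> ball 0 1 \<Longrightarrow> dh_ext \<alpha> z \<noteq> 0"
  using one_minus_nonzero by (simp add: dh_ext_def powr_def)

lemma dh_ext_0_eq: "dh_ext 0 z = inverse ((1 - z) ^ 2)"
  by (simp add: dh_ext_def powr_minus)

lemma dh_ext_half_eq: "dh_ext (1/2) z = inverse (1 - z)"
  by (simp add: dh_ext_def powr_minus)

lemma has_field_derivative_dh_ext: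
  assumes z: "z \<in> ball 0 1"
  shows "(dh_ext \<alpha> has_field_derivative of_real (2 - 2 * \<alpha>) * dh_ext \<alpha> z / (1 - z)) (at z)"
proof -
  define s where "s = (of_real (2 * \<alpha> - 2) :: complex)"
  define X where "X = (1 - z) powr (s - 1)"
  have deriv: "(dh_ext \<alpha> has_field_derivative - (s * X)) (at z)"
    unfolding dh_ext_def[abs_def] s_def X_def by (rule has_field_derivative_one_minus_powr[OF z])
  have dh_X: "dh_ext \<alpha> z = (1 - z) * X"
    unfolding dh_ext_def X_def s_def by (rule powr_eq_mult_powr_minus_one[OF one_minus_nonzero[OF z]])
  have "- (s * X) = of_real (2 - 2 * \<alpha>) * ((1 - z) * X) / (1 - z)"
    using one_minus_nonzero[OF z] by (simp add: s_def field_simps)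
  then show ?thesis using deriv by (simp only: dh_X)
qed

lemma has_field_derivative_h_ext:
  assumes z: "z \<in> ball 0 1"
  shows "(h_ext \<alpha> has_field_derivative dh_ext \<alpha> z) (at z)"
proof -
  note nz = one_minus_nonzero[OF z]
  consider "\<alpha> = 0" | "\<alpha> = 1/2" | "\<alpha> \<noteq> 0" "\<alpha> \<noteq> 1/2" by blast
  then show ?thesis
  proof cases
    case 1
    have "((\<lambda>z. z / (1 - z)) has_field_derivative (1 * (1 - z) - z * (0 - 1)) / ((1 - z) * (1 - z))) (at z)"
      by (intro DERIV_divide DERIV_diff DERIV_const DERIV_ident nz)
    moreover have "(1 * (1 - z) - z * (0 - 1)) / ((1 - z) * (1 - z)) = dh_ext \<alpha> z"
      using 1 nz by (simp add: dh_ext_def powr_minus divide_inverse power2_eq_square)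
    ultimately show ?thesis using 1 by (simp add: h_ext_def[abs_def])
  next
    case 2
    show ?thesis
      using DERIV_minus[OF has_field_derivative_one_minus_Ln[OF z]]
      unfolding 2 by (simp add: h_ext_def[abs_def] dh_ext_half_eq)
  next
    case 3
    define s where "s = (of_real (2 * \<alpha> - 1) :: complex)"
    have "s \<noteq> 0" unfolding s_def of_real_eq_0_iff using 3 by simp
    have "((\<lambda>z. (1 - (1 - z) powr s) / s) has_field_derivative (0 - - (s * (1 - z) powr (s - 1))) / s) (at z)"
      by (intro DERIV_cdivide DERIV_diff DERIV_const has_field_derivative_one_minus_powr z)
    then show ?thesis
      using 3 \<open>s \<noteq> 0\<close> by (simp add: h_ext_def[abs_def] dh_ext_def s_def)
  qed
qed

lemma has_field_derivative_g_ext_generic: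
  assumes "\<alpha> \<noteq> 0" "\<alpha> \<noteq> 1/2" and z: "z \<in> ball 0 1"
  shows "(g_ext \<alpha> has_field_derivative z * dh_ext \<alpha> z) (at z)"
proof -
  define s where "s = (of_real (2 * \<alpha> - 1) :: complex)"
  define Y where "Y = (1 - z) powr (s - 1)"
  have "s \<noteq> 0" "s + 1 \<noteq> 0" using assms by (simp_all add: s_def) (simp add: complex_eq_iff)
  have g_ext_eq: "g_ext \<alpha> = (\<lambda>z. (1 - (1 - z) powr s * (1 + z * s)) / ((s + 1) * s))"
    using assms by (intro ext) (simp add: g_ext_def s_def algebra_simps)
  have deriv: "((\<lambda>z. (1 - (1 - z) powr s * (1 + z * s)) / ((s + 1) * s)) has_field_derivative
          (0 - (- (s * Y) * (1 + z * s) + (0 + 1 * s) * (1 - z) powr s)) / ((s + 1) * s)) (at z)"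
    unfolding Y_def
    by (intro DERIV_cdivide DERIV_diff DERIV_const DERIV_mult DERIV_add DERIV_cmult_right
        DERIV_ident has_field_derivative_one_minus_powr z)
  have s_Y: "(1 - z) powr s = (1 - z) * Y"
    unfolding Y_def by (rule powr_eq_mult_powr_minus_one[OF one_minus_nonzero[OF z]])
  have "0 - (- (s * Y) * (1 + z * s) + (0 + 1 * s) * (1 - z) powr s) = z * Y * ((s + 1) * s)"
    unfolding s_Y by (simp add: algebra_simps)
  moreover have "dh_ext \<alpha> z = Y" by (simp add: dh_ext_def Y_def s_def algebra_simps)
  ultimately have "(0 - (- (s * Y) * (1 + z * s) + (0 + 1 * s) * (1 - z) powr s)) / ((s + 1) * s)
                   = z * dh_ext \<alpha> z"
    using \<open>s \<noteq> 0\<close> \<open>s + 1 \<noteq> 0\<close> by simp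
  with deriv show ?thesis unfolding g_ext_eq by simp
qed

lemma has_field_derivative_g_ext:
  assumes z: "z \<in> ball 0 1"
  shows "(g_ext \<alpha> has_field_derivative z * dh_ext \<alpha> z) (at z)"
proof -
  note nz = one_minus_nonzero[OF z]
  consider "\<alpha> = 0" | "\<alpha> = 1/2" | "\<alpha> \<noteq> 0" "\<alpha> \<noteq> 1/2" by blast
  then show ?thesis
  proof cases
    case 1
    have alg: "(1 * w - (1 - w) * (0 - 1)) / (w * w) + - inverse w = (1 - w) * inverse (w ^ 2)"
      if "w \<noteq> 0" for w :: complex
      using that by (simp add: field_simps power2_eq_square)
    have "((\<lambda>z. z / (1 - z) + Ln (1 - z)) has_field_derivative
        (1 * (1 - z) - z * (0 - 1)) / ((1 - z) * (1 - z)) + - inverse (1 - z)) (at z)"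
      by (intro DERIV_add DERIV_divide DERIV_diff DERIV_const DERIV_ident nz
          has_field_derivative_one_minus_Ln z)
    moreover from alg[OF nz] have "(1 * (1 - z) - z * (0 - 1)) / ((1 - z) * (1 - z)) + - inverse (1 - z)
                             = z * dh_ext \<alpha> z"
      unfolding 1 dh_ext_0_eq by simp
    ultimately show ?thesis using 1 by (simp add: g_ext_def[abs_def])
  next
    case 2
    have "((\<lambda>z. - (z + Ln (1 - z))) has_field_derivative - (1 + - inverse (1 - z))) (at z)"
      by (intro DERIV_minus DERIV_add DERIV_ident has_field_derivative_one_minus_Ln z)
    moreover have "- (1 + - inverse (1 - z)) = z * dh_ext \<alpha> z"
      using nz unfolding 2 by (simp add: dh_ext_half_eq field_simps)
    ultimately show ?thesis unfolding 2 by (simp add: g_ext_def[abs_def])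
  next
    case 3
    then show ?thesis by (rule has_field_derivative_g_ext_generic[OF _ _ z])
  qed
qed

lemma holomorphic_h_ext: "h_ext \<alpha> holomorphic_on ball 0 1"
  unfolding holomorphic_on_open[OF open_ball] using has_field_derivative_h_ext by blast

lemma in_F_extremal:
  assumes "\<alpha> < 1"
  shows "in_F \<alpha> (h_ext \<alpha>) (g_ext \<alpha>)"
  unfolding in_F_def
proof (intro conjI ballI exI[of _ 0])
  have h': "deriv (h_ext \<alpha>) z = dh_ext \<alpha> z" and g': "deriv (g_ext \<alpha>) z = z * dh_ext \<alpha> z"
    and h'': "deriv (deriv (h_ext \<alpha>)) z = of_real (2 - 2 * \<alpha>) * dh_ext \<alpha> z / (1 - z)"
    if "z \<in> ball 0 1" for z
    using that has_field_derivative_h_ext has_field_derivative_g_ext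
      deriv_deriv_eqI[OF open_ball that has_field_derivative_h_ext has_field_derivative_dh_ext[OF that]]
    by (auto intro: DERIV_imp_deriv)
  show "h_ext \<alpha> holomorphic_on ball 0 1" by (rule holomorphic_h_ext)
  show "g_ext \<alpha> holomorphic_on ball 0 1"
    unfolding holomorphic_on_open[OF open_ball] using has_field_derivative_g_ext by blast
  show "h_ext \<alpha> 0 = 0" "g_ext \<alpha> 0 = 0" "deriv (h_ext \<alpha>) 0 = 1"
    by (simp_all add: h_ext_def g_ext_def h')
  fix z :: complex assume z: "z \<in> ball 0 1"
  show "deriv (h_ext \<alpha>) z \<noteq> 0" using dh_ext_nonzero[OF z] h'[OF z] by simp
  show "deriv (g_ext \<alpha>) z = exp (\<i> * of_real 0) * z * deriv (h_ext \<alpha>) z"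
    using g'[OF z] h'[OF z] by simp
  define w where "w = z / (1 - z)"
  have "z * deriv (deriv (h_ext \<alpha>)) z / deriv (h_ext \<alpha>) z = of_real (2 - 2 * \<alpha>) * w"
    using dh_ext_nonzero[OF z] one_minus_nonzero[OF z] unfolding h'[OF z] h''[OF z] w_def
    by (simp add: field_simps del: of_real_diff)
  then have "Re (1 + z * deriv (deriv (h_ext \<alpha>)) z / deriv (h_ext \<alpha>) z) = 1 + (2 - 2 * \<alpha>) * Re w"
    by (simp del: of_real_diff)
  moreover have "(2 - 2 * \<alpha>) * Re w > (2 - 2 * \<alpha>) * (- 1/2)"
    using Re_div_one_minus_gt[of z] z \<open>\<alpha> < 1\<close> unfolding w_def by (intro mult_strict_left_mono) auto
  ultimately show "Re (1 + z * deriv (deriv (h_ext \<alpha>)) z / deriv (h_ext \<alpha>) z) > \<alpha>"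
    by argo
qed

lemma h_ext_fps_ode:
  fixes \<alpha> :: real
  defines "H \<equiv> fps_expansion (h_ext \<alpha>) 0"
  shows "(1 - fps_X) * fps_deriv (fps_deriv H) = fps_const (of_real (2 - 2 * \<alpha>)) * fps_deriv H"
proof (rule has_fps_expansion_unique_eventually)
  have H_exp: "h_ext \<alpha> has_fps_expansion H"
    unfolding H_def by (rule holomorphic_on_ball_has_fps_expansion[OF holomorphic_h_ext]) simp
  show "(\<lambda>z. (1 - z) * deriv (deriv (h_ext \<alpha>)) z) has_fps_expansion (1 - fps_X) * fps_deriv (fps_deriv H)"
       "(\<lambda>z. of_real (2 - 2 * \<alpha>) * deriv (h_ext \<alpha>) z) has_fps_expansion
          fps_const (of_real (2 - 2 * \<alpha>)) * fps_deriv H"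
    by (intro fps_expansion_intros H_exp)+
  have "(1 - z) * deriv (deriv (h_ext \<alpha>)) z = of_real (2 - 2 * \<alpha>) * deriv (h_ext \<alpha>) z"
    if z: "z \<in> ball 0 1" for z
    using deriv_deriv_eqI[OF open_ball z has_field_derivative_h_ext has_field_derivative_dh_ext[OF z]]
      DERIV_imp_deriv[OF has_field_derivative_h_ext[OF z]] one_minus_nonzero[OF z]
    by (simp del: of_real_diff)
  then show "\<forall>\<^sub>F z in nhds 0. (1 - z) * deriv (deriv (h_ext \<alpha>)) z =
                               of_real (2 - 2 * \<alpha>) * deriv (h_ext \<alpha>) z"
    by (intro eventually_nhds_ball[of 0 0 1]) auto
qed

lemma taylor_coeff_h_ext:
  assumes "n \<ge> 1"
  shows "taylor_coeff (h_ext \<alpha>) n = of_real (A_coef n \<alpha>)"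
proof -
  define H where "H = fps_expansion (h_ext \<alpha>) 0"
  note rec = fps_coeff_of_one_minus_X_ode[OF h_ext_fps_ode[of \<alpha>, folded H_def]]
  have "H $ n = of_real (A_coef n \<alpha>)"
    using \<open>n \<ge> 1\<close>
  proof (induction n rule: dec_induct)
    case base
    show ?case using DERIV_imp_deriv[OF has_field_derivative_h_ext, of 0]
      by (simp add: H_def fps_expansion_def A_coef_def)
  next
    case (step j)
    then obtain m where j: "j = Suc m" by (cases j) auto
    have nz: "(of_nat (Suc j) :: complex) \<noteq> 0" by (simp only: of_nat_eq_0_iff)
    have "of_nat (Suc j) * H $ Suc j = of_real ((real (Suc j) - 2 * \<alpha>) * A_coef j \<alpha>)"
      using rec[of m] step.IH unfolding j by simp
    also have "\<dots> = of_nat (Suc j) * of_real (A_coef (Suc j) \<alpha>)"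
      by (simp only: A_coef_Suc[OF \<open>j \<ge> 1\<close>, symmetric] of_real_mult of_real_of_nat_eq)
    finally show ?case by (rule iffD1[OF mult_left_cancel[OF nz]])
  qed
  then show ?thesis by (simp add: H_def taylor_coeff_conv_fps_expansion)
qed

lemma rotated_extremal:
  fixes \<phi> :: real
  assumes "\<alpha> < 1"
  defines "hr \<equiv> \<lambda>z. exp (- \<i> * of_real \<phi>) * h_ext \<alpha> (exp (\<i> * of_real \<phi>) * z)"
    and "gr \<equiv> \<lambda>z. exp (\<i> * of_real \<phi>) * g_ext \<alpha> (exp (\<i> * of_real \<phi>) * z)"
  shows "in_F \<alpha> hr gr"
    and "n \<ge> 1 \<Longrightarrow> norm (taylor_coeff hr n) = A_coef n \<alpha>"
    and "n \<ge> 2 \<Longrightarrow> norm (taylor_coeff gr n) = (real n - 1) / (real n - 2 * \<alpha>) * A_coef n \<alpha>"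
proof -
  show F: "in_F \<alpha> hr gr"
    unfolding hr_def gr_def by (rule in_F_rotate[OF in_F_extremal[OF assms(1)]])
  show hr_coeff: "norm (taylor_coeff hr n) = A_coef n \<alpha>" if "n \<ge> 1" for n
    using taylor_coeff_h_ext[OF that] A_coef_pos[OF assms(1), of n] unfolding hr_def
    by (simp add: taylor_coeff_compose_scale[OF holomorphic_h_ext] norm_mult norm_power norm_exp_eq_Re)
  show "norm (taylor_coeff gr n) = (real n - 1) / (real n - 2 * \<alpha>) * A_coef n \<alpha>" if "n \<ge> 2" for n
    using in_F_norm_coeff_g_eq[OF F assms(1) that hr_coeff] that by simp
qed

theorem theorem2:
  fixes \<alpha> :: real
  assumes "0 \<le> \<alpha>" and "\<alpha> < 1"
  shows "(\<forall>h g. in_F \<alpha> h g \<longrightarrow>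
            (\<forall>n::nat. n \<ge> 2 \<longrightarrow>
               norm (taylor_coeff h n) \<le> A_coef n \<alpha> \<and>
               norm (taylor_coeff g n) \<le> (real n - 1) / (real n - 2 * \<alpha>) * A_coef n \<alpha>))
       \<and> (\<forall>\<phi>::real.
            let hr = (\<lambda>z. exp (- \<i> * of_real \<phi>) * h_ext \<alpha> (exp (\<i> * of_real \<phi>) * z));
                gr = (\<lambda>z. exp (\<i> * of_real \<phi>) * g_ext \<alpha> (exp (\<i> * of_real \<phi>) * z))
            in in_F \<alpha> hr gr \<and>
               (\<forall>n::nat. n \<ge> 2 \<longrightarrow>
                  norm (taylor_coeff hr n) = A_coef n \<alpha> \<and>
                  norm (taylor_coeff gr n) = (real n - 1) / (real n - 2 * \<alpha>) * A_coef n \<alpha>))"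
proof (intro conjI allI impI)
  fix h g and n :: nat
  assume "in_F \<alpha> h g" and "n \<ge> 2"
  then show "norm (taylor_coeff h n) \<le> A_coef n \<alpha>"
    and "norm (taylor_coeff g n) \<le> (real n - 1) / (real n - 2 * \<alpha>) * A_coef n \<alpha>"
    using in_F_norm_coeff_h_le in_F_norm_coeff_g_le \<open>\<alpha> < 1\<close> by auto
next
  fix \<phi> :: real
  show "let hr = (\<lambda>z. exp (- \<i> * of_real \<phi>) * h_ext \<alpha> (exp (\<i> * of_real \<phi>) * z));
            gr = (\<lambda>z. exp (\<i> * of_real \<phi>) * g_ext \<alpha> (exp (\<i> * of_real \<phi>) * z))
        in in_F \<alpha> hr gr \<and>
           (\<forall>n::nat. n \<ge> 2 \<longrightarrow>
              norm (taylor_coeff hr n) = A_coef n \<alpha> \<and>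
              norm (taylor_coeff gr n) = (real n - 1) / (real n - 2 * \<alpha>) * A_coef n \<alpha>)"
    unfolding Let_def using rotated_extremal[OF \<open>\<alpha> < 1\<close>, where \<phi>=\<phi>] by simp
qed

end
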